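(* Let $G$ be a graph of girth at least $7$ with vertex order $v_1,\ldots,v_n$, let $D$ be a minimal dominating set of $G$, let $u,w\in D$ be adjacent, let $v\in P_D(u)$, and let $X_{uv}$, $D^*$, $Z_{uv}$ be as in the context. Then $X_{uv}=P_D(u)\setminus\{v\}$, and each vertex of $Z_{uv}$ has at most one neighbor in $\bigcup_{x\in X_{uv}\cup\{v\}}P_{D^*}(x)\setminus N[u]$.
   Context: Graphs are finite, simple, undirected; girth is the length of a shortest cycle. $N(x)$ is the open and $N[x]=N(x)\cup\{x\}$ the closed neighborhood, $N[S]=\bigcup_{x\in S}N[x]$. A dominating set is $D\subseteq V(G)$ with $N[D]=V(G)$; minimal if no proper subset is dominating. For a dominating set $D$ and $x\in D$, a vertex $y$ is private for $x$ if $y\in N[x]\setminus N[D\setminus\{x\}]$; $P_D[x]$ is the set of such $y$ and $P_D(x)=P_D[x]\cap N(x)$. Fix an order $v_1,\ldots,v_n$ of $V(G)$. Greedy removal from a dominating set $D'$: while the current set $S$ is not a minimal dominating set, remove from $S$ the vertex $v_i$ of smallest index such that $S\setminus\{v_i\}$ is still dominating. Given $D,u,v$: $X_{uv}$ is built by starting from $\emptyset$ and repeatedly adding the smallest-index vertex of $P_D(u)\setminus N[\{v\}\cup X_{uv}]$ while this set is nonempty. Let $D'=(D\setminus\{u\})\cup X_{uv}\cup\{v\}$, let $D^*$ be the result of greedy removal from $D'$, and $Z_{uv}=D'\setminus D^*$. *)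

theory Defs
  imports Main
begin

text \<open>A finite simple graph is given by a list vs of its vertices (distinct), which
  also fixes the vertex order v_1,...,v_n (the i-th list entry is v_i), and a symmetric,
  irreflexive adjacency relation E on set vs.\<close>

definition simple_graph :: "'a list \<Rightarrow> ('a \<Rightarrow> 'a \<Rightarrow> bool) \<Rightarrow> bool" where
  "simple_graph vs E \<longleftrightarrow> distinct vs \<and> (\<forall>x y. E x y \<longrightarrow> E y x)
     \<and> (\<forall>x. \<not> E x x) \<and> (\<forall>x y. E x y \<longrightarrow> x \<in> set vs \<and> y \<in> set vs)"

definition is_cycle :: "'a list \<Rightarrow> ('a \<Rightarrow> 'a \<Rightarrow> bool) \<Rightarrow> 'a list \<Rightarrow> bool" where
  "is_cycle vs E cs \<longleftrightarrow> length cs \<ge> 3 \<and> distinct cs \<and> set cs \<subseteq> set vs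
     \<and> (\<forall>i < length cs. E (cs ! i) (cs ! ((i + 1) mod length cs)))"

definition girth_at_least :: "'a list \<Rightarrow> ('a \<Rightarrow> 'a \<Rightarrow> bool) \<Rightarrow> nat \<Rightarrow> bool" where
  "girth_at_least vs E g \<longleftrightarrow> (\<forall>cs. is_cycle vs E cs \<longrightarrow> length cs \<ge> g)"

definition open_nbh :: "'a list \<Rightarrow> ('a \<Rightarrow> 'a \<Rightarrow> bool) \<Rightarrow> 'a \<Rightarrow> 'a set" where
  "open_nbh vs E x = {y \<in> set vs. E x y}"

definition closed_nbh :: "'a list \<Rightarrow> ('a \<Rightarrow> 'a \<Rightarrow> bool) \<Rightarrow> 'a \<Rightarrow> 'a set" where
  "closed_nbh vs E x = insert x (open_nbh vs E x)"

definition closed_nbh_set :: "'a list \<Rightarrow> ('a \<Rightarrow> 'a \<Rightarrow> bool) \<Rightarrow> 'a set \<Rightarrow> 'a set" where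
  "closed_nbh_set vs E S = (\<Union>x\<in>S. closed_nbh vs E x)"

definition dominating :: "'a list \<Rightarrow> ('a \<Rightarrow> 'a \<Rightarrow> bool) \<Rightarrow> 'a set \<Rightarrow> bool" where
  "dominating vs E D \<longleftrightarrow> D \<subseteq> set vs \<and> closed_nbh_set vs E D = set vs"

definition minimal_dominating :: "'a list \<Rightarrow> ('a \<Rightarrow> 'a \<Rightarrow> bool) \<Rightarrow> 'a set \<Rightarrow> bool" where
  "minimal_dominating vs E D \<longleftrightarrow> dominating vs E D \<and> (\<forall>D'. D' \<subset> D \<longrightarrow> \<not> dominating vs E D')"

definition priv_closed :: "'a list \<Rightarrow> ('a \<Rightarrow> 'a \<Rightarrow> bool) \<Rightarrow> 'a set \<Rightarrow> 'a \<Rightarrow> 'a set" where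
  "priv_closed vs E D x = closed_nbh vs E x - closed_nbh_set vs E (D - {x})"

definition priv_open :: "'a list \<Rightarrow> ('a \<Rightarrow> 'a \<Rightarrow> bool) \<Rightarrow> 'a set \<Rightarrow> 'a \<Rightarrow> 'a set" where
  "priv_open vs E D x = priv_closed vs E D x \<inter> open_nbh vs E x"

text \<open>The loop is run
  with fuel; since each iteration removes a vertex of S \<subseteq> set vs, fuel length vs suffices
  for the loop to reach its natural termination whenever S \<subseteq> set vs.\<close>
fun greedy_iter :: "'a list \<Rightarrow> ('a \<Rightarrow> 'a \<Rightarrow> bool) \<Rightarrow> nat \<Rightarrow> 'a set \<Rightarrow> 'a set" where
  "greedy_iter vs E 0 S = S"
| "greedy_iter vs E (Suc k) S =
     (if minimal_dominating vs E S then S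
      else (case find (\<lambda>x. x \<in> S \<and> dominating vs E (S - {x})) vs of
              None \<Rightarrow> S
            | Some x \<Rightarrow> greedy_iter vs E k (S - {x})))"

definition greedy_removal :: "'a list \<Rightarrow> ('a \<Rightarrow> 'a \<Rightarrow> bool) \<Rightarrow> 'a set \<Rightarrow> 'a set" where
  "greedy_removal vs E S = greedy_iter vs E (length vs) S"

text \<open>Each step adds a new vertex (it lies outside N[X]),
  so fuel length vs suffices.\<close>
fun X_iter :: "'a list \<Rightarrow> ('a \<Rightarrow> 'a \<Rightarrow> bool) \<Rightarrow> 'a set \<Rightarrow> 'a \<Rightarrow> 'a \<Rightarrow> nat \<Rightarrow> 'a set \<Rightarrow> 'a set" where
  "X_iter vs E D u v 0 X = X"
| "X_iter vs E D u v (Suc k) X =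
     (case find (\<lambda>y. y \<in> priv_open vs E D u - closed_nbh_set vs E ({v} \<union> X)) vs of
        None \<Rightarrow> X
      | Some y \<Rightarrow> X_iter vs E D u v k (insert y X))"

definition X_uv :: "'a list \<Rightarrow> ('a \<Rightarrow> 'a \<Rightarrow> bool) \<Rightarrow> 'a set \<Rightarrow> 'a \<Rightarrow> 'a \<Rightarrow> 'a set" where
  "X_uv vs E D u v = X_iter vs E D u v (length vs) {}"

definition D_prime :: "'a list \<Rightarrow> ('a \<Rightarrow> 'a \<Rightarrow> bool) \<Rightarrow> 'a set \<Rightarrow> 'a \<Rightarrow> 'a \<Rightarrow> 'a set" where
  "D_prime vs E D u v = (D - {u}) \<union> X_uv vs E D u v \<union> {v}"

definition D_star :: "'a list \<Rightarrow> ('a \<Rightarrow> 'a \<Rightarrow> bool) \<Rightarrow> 'a set \<Rightarrow> 'a \<Rightarrow> 'a \<Rightarrow> 'a set" where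
  "D_star vs E D u v = greedy_removal vs E (D_prime vs E D u v)"

definition Z_uv :: "'a list \<Rightarrow> ('a \<Rightarrow> 'a \<Rightarrow> bool) \<Rightarrow> 'a set \<Rightarrow> 'a \<Rightarrow> 'a \<Rightarrow> 'a set" where
  "Z_uv vs E D u v = D_prime vs E D u v - D_star vs E D u v"

end

theory Submission
  imports Defs
begin

text \<open>Girth at least 7 excludes triangles, 4-cycles and 6-cycles. Without triangles the private
  neighbourhood P_D(u) is independent, so the greedy construction of X_uv never discards a vertex
  other than v and X_uv \<union> {v} = P_D(u). A vertex z of Z_uv with two neighbours y1, y2 private for
  x1, x2 \<in> P_D(u) and outside N[u] closes the 4-cycle z y1 x1 y2 (if x1 = x2) or the 6-cycle
  u x1 y1 z y2 x2.\<close>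

lemma simple_graph_sym: "simple_graph vs E \<Longrightarrow> E x y \<Longrightarrow> E y x"
  unfolding simple_graph_def by blast

lemma simple_graph_neq: "simple_graph vs E \<Longrightarrow> E x y \<Longrightarrow> x \<noteq> y"
  unfolding simple_graph_def by blast

lemma simple_graph_in_vertices:
  "simple_graph vs E \<Longrightarrow> E x y \<Longrightarrow> x \<in> set vs \<and> y \<in> set vs"
  unfolding simple_graph_def by blast

lemma girth_no_triangle:
  assumes "simple_graph vs E" "girth_at_least vs E g" "4 \<le> g"
    and "E a b" "E b c" "E c a"
  shows False
proof -
  have "is_cycle vs E [a, b, c]"
    using assms(4-6) simple_graph_neq[OF assms(1)] simple_graph_in_vertices[OF assms(1)]
    unfolding is_cycle_def by (auto simp: less_Suc_eq)
  then show False
    using assms(2,3) unfolding girth_at_least_def by fastforce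
qed

lemma girth_no_4_cycle:
  assumes "simple_graph vs E" "girth_at_least vs E g" "5 \<le> g"
    and "E a b" "E b c" "E c d" "E d a" "a \<noteq> c" "b \<noteq> d"
  shows False
proof -
  have "is_cycle vs E [a, b, c, d]"
    using assms(4-9) simple_graph_neq[OF assms(1)] simple_graph_in_vertices[OF assms(1)]
    unfolding is_cycle_def by (auto simp: less_Suc_eq)
  then show False
    using assms(2,3) unfolding girth_at_least_def by fastforce
qed

lemma girth_no_6_cycle:
  assumes "simple_graph vs E" "girth_at_least vs E g" "7 \<le> g"
    and "E a b" "E b c" "E c d" "E d e" "E e f" "E f a" "distinct [a, b, c, d, e, f]"
  shows False
proof -
  have "is_cycle vs E [a, b, c, d, e, f]"
    using assms(4-10) simple_graph_in_vertices[OF assms(1)]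
    unfolding is_cycle_def by (auto simp: less_Suc_eq)
  then show False
    using assms(2,3) unfolding girth_at_least_def by fastforce
qed

lemma open_nbh_independent:
  assumes "simple_graph vs E" "girth_at_least vs E g" "4 \<le> g"
    and "a \<in> open_nbh vs E u" "b \<in> open_nbh vs E u"
  shows "\<not> E a b"
proof
  assume "E a b"
  have "E u a" "E u b"
    using assms(4,5) by (simp_all add: open_nbh_def)
  then show False
    using girth_no_triangle[OF assms(1-3) \<open>E u a\<close> \<open>E a b\<close>] simple_graph_sym[OF assms(1)]
    by blast
qed

lemma priv_open_subset_open_nbh: "priv_open vs E D u \<subseteq> open_nbh vs E u"
  unfolding priv_open_def by blast

lemma independent_diff_closed_nbh_set:
  assumes "\<And>a b. a \<in> P \<Longrightarrow> b \<in> P \<Longrightarrow> \<not> E a b" "S \<subseteq> P"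
  shows "P - closed_nbh_set vs E S = P - S"
  using assms unfolding closed_nbh_set_def closed_nbh_def open_nbh_def by auto

lemma X_iter_eq_priv_open:
  assumes indep: "\<And>a b. a \<in> priv_open vs E D u \<Longrightarrow> b \<in> priv_open vs E D u \<Longrightarrow> \<not> E a b"
    and v: "v \<in> priv_open vs E D u"
  shows "X \<subseteq> priv_open vs E D u - {v} \<Longrightarrow> card (priv_open vs E D u - {v} - X) \<le> k
    \<Longrightarrow> X_iter vs E D u v k X = priv_open vs E D u - {v}"
proof (induction k arbitrary: X)
  let ?P = "priv_open vs E D u"
  have P_vertices: "?P \<subseteq> set vs"
    using priv_open_subset_open_nbh[of vs E D u] unfolding open_nbh_def by blast
  have candidates: "?P - closed_nbh_set vs E ({v} \<union> X) = ?P - {v} - X"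
    if "X \<subseteq> ?P - {v}" for X
  proof -
    have "{v} \<union> X \<subseteq> ?P"
      using that v by blast
    from independent_diff_closed_nbh_set[where P = ?P and E = E, OF indep this]
    show ?thesis by auto
  qed
  {
    case 0
    then show ?case
      using finite_subset[OF P_vertices] by auto
  next
    case (Suc k)
    note candidates = candidates[OF Suc.prems(1)]
    show ?case
    proof (cases "find (\<lambda>y. y \<in> ?P - closed_nbh_set vs E ({v} \<union> X)) vs")
      case None
      then have "\<forall>y \<in> set vs. y \<notin> ?P - {v} - X"
        unfolding find_None_iff candidates by blast
      then have "?P - {v} - X = {}"
        using P_vertices by blast
      then show ?thesis
        using None Suc.prems(1) by auto
    next
      case (Some y)
      then have y: "y \<in> ?P - {v} - X"
        unfolding find_Some_iff candidates by auto
      have "?P - {v} - insert y X = (?P - {v} - X) - {y}"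
        by blast
      then have "card (?P - {v} - insert y X) \<le> k"
        using y Suc.prems(2) finite_subset[OF P_vertices] by (simp add: card_Diff_singleton)
      then show ?thesis
        using Some Suc.IH[of "insert y X"] Suc.prems(1) y by simp
    qed
  }
qed

lemma X_uv_eq_priv_open:
  assumes "simple_graph vs E" "girth_at_least vs E g" "4 \<le> g" "v \<in> priv_open vs E D u"
  shows "X_uv vs E D u v = priv_open vs E D u - {v}"
proof -
  have "card (priv_open vs E D u - {v}) \<le> card (set vs)"
    using priv_open_subset_open_nbh[of vs E D u] unfolding open_nbh_def
    by (intro card_mono) auto
  also have "\<dots> = length vs"
    using assms(1) distinct_card unfolding simple_graph_def by blast
  finally show ?thesis
    unfolding X_uv_def
    using X_iter_eq_priv_open[of vs E D u v "{}"] assms(4) priv_open_subset_open_nbh[of vs E D u]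
      open_nbh_independent[OF assms(1-3), of _ u] by (simp add: subset_iff)
qed

lemma closed_nbh_set_subset_vertices:
  "S \<subseteq> set vs \<Longrightarrow> closed_nbh_set vs E S \<subseteq> set vs"
  unfolding closed_nbh_set_def closed_nbh_def open_nbh_def by blast

lemma dominating_swap_priv_open:
  assumes "simple_graph vs E" "dominating vs E D" "v \<in> priv_open vs E D u"
  shows "dominating vs E ((D - {u}) \<union> priv_open vs E D u)"
proof -
  let ?D' = "(D - {u}) \<union> priv_open vs E D u"
  have vertices: "?D' \<subseteq> set vs"
    using assms(2) priv_open_subset_open_nbh[of vs E D u]
    unfolding dominating_def open_nbh_def by blast
  have "E u v"
    using assms(3) unfolding priv_open_def open_nbh_def by blast
  then have u_dominated: "u \<in> closed_nbh vs E v"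
    using simple_graph_sym[OF assms(1)] simple_graph_in_vertices[OF assms(1)]
    unfolding closed_nbh_def open_nbh_def by blast
  have "y \<in> closed_nbh_set vs E ?D'" if "y \<in> set vs" for y
  proof -
    have "y \<in> closed_nbh_set vs E D"
      using that assms(2) unfolding dominating_def by simp
    then obtain d where d: "d \<in> D" "y \<in> closed_nbh vs E d"
      unfolding closed_nbh_set_def by blast
    show ?thesis
    proof (cases "d = u \<and> y \<notin> closed_nbh_set vs E (D - {u})")
      case True
      then have "y = u \<or> y \<in> priv_open vs E D u"
        using d unfolding priv_open_def priv_closed_def closed_nbh_def by blast
      then show ?thesis
        using u_dominated assms(3) unfolding closed_nbh_set_def closed_nbh_def by blast
    next
      case False
      then show ?thesis
        using d unfolding closed_nbh_set_def by blast
    qed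
  qed
  then show ?thesis
    using vertices closed_nbh_set_subset_vertices[OF vertices]
    unfolding dominating_def by blast
qed

lemma dominating_greedy_iter:
  "dominating vs E S \<Longrightarrow> dominating vs E (greedy_iter vs E k S)"
proof (induction k arbitrary: S)
  case (Suc k)
  then show ?case
    by (auto simp: minimal_dominating_def find_Some_iff split: option.split)
qed simp

lemma priv_open_owner_in_dominating:
  assumes "dominating vs E S" "y \<in> priv_open vs E S x"
  shows "x \<in> S"
proof (rule ccontr)
  assume "x \<notin> S"
  then have "y \<notin> closed_nbh_set vs E S"
    using assms(2) unfolding priv_open_def priv_closed_def by simp
  then show False
    using assms unfolding dominating_def priv_open_def open_nbh_def by blast
qed

lemma card_private_neighbours_outside_closed_nbh_le_1:
  assumes G: "simple_graph vs E" "girth_at_least vs E g" "7 \<le> g"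
    and S: "dominating vs E S" and P: "P \<subseteq> open_nbh vs E u"
    and z: "z \<notin> S" "z \<noteq> u"
  shows "card (open_nbh vs E z \<inter> ((\<Union>x \<in> P. priv_open vs E S x) - closed_nbh vs E u)) \<le> 1"
    (is "card ?Y \<le> 1")
proof -
  have neighbour: "\<exists>x. x \<in> S \<and> E u x \<and> E x y \<and> E z y \<and> y \<noteq> u \<and> \<not> E u y"
    if "y \<in> ?Y" for y
    using that P priv_open_owner_in_dominating[OF S]
    unfolding priv_open_def closed_nbh_def open_nbh_def by blast
  have "y1 = y2" if y1: "y1 \<in> ?Y" and y2: "y2 \<in> ?Y" for y1 y2
  proof (rule ccontr)
    assume "y1 \<noteq> y2"
    obtain x1 where x1: "x1 \<in> S" "E u x1" "E x1 y1" "E z y1" "y1 \<noteq> u" "\<not> E u y1"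
      using neighbour[OF y1] by blast
    obtain x2 where x2: "x2 \<in> S" "E u x2" "E x2 y2" "E z y2" "y2 \<noteq> u" "\<not> E u y2"
      using neighbour[OF y2] by blast
    have sym: "E b a" if "E a b" for a b
      using simple_graph_sym[OF G(1) that] .
    have neq: "a \<noteq> b" if "E a b" for a b
      using simple_graph_neq[OF G(1) that] .
    have "x1 \<noteq> z" "x2 \<noteq> z"
      using x1(1) x2(1) z(1) by auto
    show False
    proof (cases "x1 = x2")
      case True
      show False
        using girth_no_4_cycle[OF G(1,2) _ x1(4) sym[OF x1(3)] x2(3)[folded True] sym[OF x2(4)]]
          G(3) \<open>x1 \<noteq> z\<close> \<open>y1 \<noteq> y2\<close> by auto
    next
      case False
      have "x1 \<noteq> y2" "x2 \<noteq> y1"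
        using x1(2) x2(2) x1(6) x2(6) by auto
      then have "distinct [u, x1, y1, z, y2, x2]"
        using False z(2) x1 x2 \<open>y1 \<noteq> y2\<close> \<open>x1 \<noteq> z\<close> \<open>x2 \<noteq> z\<close>
          neq[OF x1(2)] neq[OF x2(2)] neq[OF x1(3)] neq[OF x2(3)] neq[OF x1(4)] neq[OF x2(4)]
        by auto
      then show False
        using girth_no_6_cycle[OF G x1(2,3) sym[OF x1(4)] x2(4) sym[OF x2(3)] sym[OF x2(2)]]
        by blast
    qed
  qed
  moreover have "finite ?Y"
    by (rule finite_subset[of _ "set vs"]) (auto simp: open_nbh_def)
  ultimately show ?thesis by (simp add: card_le_Suc0_iff_eq)
qed

theorem lemma10:
  fixes vs :: "'a list" and E :: "'a \<Rightarrow> 'a \<Rightarrow> bool" and D :: "'a set" and u w v :: 'a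
  assumes "simple_graph vs E"
    and "girth_at_least vs E 7"
    and "minimal_dominating vs E D"
    and "u \<in> D" and "w \<in> D" and "E u w"
    and "v \<in> priv_open vs E D u"
  shows "X_uv vs E D u v = priv_open vs E D u - {v}
    \<and> (\<forall>z \<in> Z_uv vs E D u v.
         card (open_nbh vs E z \<inter>
           ((\<Union>x \<in> X_uv vs E D u v \<union> {v}. priv_open vs E (D_star vs E D u v) x)
             - closed_nbh vs E u)) \<le> 1)"
proof -
  let ?P = "priv_open vs E D u"
  have X: "X_uv vs E D u v = ?P - {v}"
    using X_uv_eq_priv_open[OF assms(1,2) _ assms(7)] by simp
  then have X_v: "X_uv vs E D u v \<union> {v} = ?P"
    using assms(7) by blast
  then have D': "D_prime vs E D u v = (D - {u}) \<union> ?P"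
    unfolding D_prime_def Un_assoc by simp
  define Ds where "Ds = D_star vs E D u v"
  have "dominating vs E D"
    using assms(3) unfolding minimal_dominating_def by simp
  then have "dominating vs E (D_prime vs E D u v)"
    unfolding D' by (rule dominating_swap_priv_open[OF assms(1) _ assms(7)])
  then have dominating_Ds: "dominating vs E Ds"
    unfolding Ds_def D_star_def greedy_removal_def by (rule dominating_greedy_iter)
  have "z \<notin> Ds \<and> z \<noteq> u" if "z \<in> Z_uv vs E D u v" for z
  proof -
    have "z \<in> (D - {u}) \<union> ?P" "z \<notin> Ds"
      using that unfolding Z_uv_def D' Ds_def by simp_all
    moreover have "u \<notin> ?P"
      using priv_open_subset_open_nbh[of vs E D u] simple_graph_neq[OF assms(1)]
      unfolding open_nbh_def by blast
    ultimately show ?thesis by blast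
  qed
  then show ?thesis
    unfolding X_v Ds_def[symmetric]
    using X card_private_neighbours_outside_closed_nbh_le_1[OF assms(1,2) order_refl dominating_Ds
        priv_open_subset_open_nbh]
    by blast
qed

end
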